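(* Let $k\ge 1$ and $N=2^{k+1}$. There exist a finite field $\mathbb{F}_q$ of order $q\ge 2k+3$ and explicit constants $a_i,b_i\in\mathbb{F}_q$ with $a_i^2-b_i^2=-1$ for all $i\in\{1,\ldots,k\}$, such that the $(k+2,k)$ storage code with coding matrices $\mathbf{A}_i=a_i\mathbf{X}_i+b_i\mathbf{X}_{k+1}+\mathbf{I}_N$ ($i=1,\ldots,k$) is a repair optimal MDS storage code; that is: (1) (MDS) for every choice of $k$ of the $k+2$ nodes, the file $\mathbf{f}$ is uniquely determined by (computable from) the contents of those $k$ nodes; and (2) (optimal repair) for every single node (systematic or parity), the contents of that node can be exactly recovered from a total of $(k+1)\frac{N}{2}$ downloaded symbols, namely $\frac{N}{2}$ $\mathbb{F}_q$-linear combinations of the stored contents of each of the other $k+1$ nodes.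
   Context: All arithmetic is over a finite field $\mathbb{F}_q$; $-1$ denotes the field element $q-1$. A file $\mathbf{f}\in\mathbb{F}_q^{kN}$ is partitioned as $\mathbf{f}=[\mathbf{f}_1^T\ \cdots\ \mathbf{f}_k^T]^T$ with each $\mathbf{f}_i\in\mathbb{F}_q^N$. The $(k+2,k)$ storage code with $N\times N$ coding matrices $\mathbf{A}_1,\ldots,\mathbf{A}_k$ consists of $k+2$ nodes, each storing $N$ symbols: systematic node $i\in\{1,\ldots,k\}$ stores $\mathbf{f}_i$; the first parity node stores $\mathbf{f}_1+\cdots+\mathbf{f}_k$; the second parity node stores $\mathbf{A}_1^T\mathbf{f}_1+\cdots+\mathbf{A}_k^T\mathbf{f}_k$. For $i\in\{1,\ldots,k+1\}$, $\mathbf{X}_i=\mathbf{I}_{2^{i-1}}\otimes\mathrm{blkdiag}\big(\mathbf{I}_{N/2^i},-\mathbf{I}_{N/2^i}\big)$, an $N\times N$ diagonal matrix with entries $\pm1$; $\otimes$ is the Kronecker product and $\mathbf{I}_r$ the $r\times r$ identity. (The value $(k+1)\frac{N}{2}$ is the known information-theoretic minimum repair bandwidth for a single node of a $(k+2,k)$ MDS code storing $N$ symbols per node.) *)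

theory Defs
  imports "HOL-Algebra.Algebra"
begin

text \<open>A finite field is represented as an HOL-Algebra ring record R with carrier a
  finite subset of nat (every finite field is isomorphic to such a structure).
  Indices: systematic blocks i in {1..k}, positions r, c in {0..<N}.
  A file is f :: nat => nat => nat, f i r = r-th entry of block f_i.
  Coding matrices: A :: nat => nat => nat => nat, A i r c = (r,c) entry of A_i.\<close>

definition is_file :: "nat ring \<Rightarrow> nat \<Rightarrow> nat \<Rightarrow> (nat \<Rightarrow> nat \<Rightarrow> nat) \<Rightarrow> bool" where
  "is_file R k N f \<longleftrightarrow> (\<forall>i\<in>{1..k}. \<forall>r<N. f i r \<in> carrier R)"

definition matT_vec :: "nat ring \<Rightarrow> nat \<Rightarrow> (nat \<Rightarrow> nat \<Rightarrow> nat) \<Rightarrow> (nat \<Rightarrow> nat) \<Rightarrow> nat \<Rightarrow> nat" where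
  "matT_vec R N M v r = finsum R (\<lambda>c. M c r \<otimes>\<^bsub>R\<^esub> v c) {..<N}"

definition node_content ::
  "nat ring \<Rightarrow> nat \<Rightarrow> nat \<Rightarrow> (nat \<Rightarrow> nat \<Rightarrow> nat \<Rightarrow> nat) \<Rightarrow> nat \<Rightarrow> (nat \<Rightarrow> nat \<Rightarrow> nat) \<Rightarrow> nat \<Rightarrow> nat" where
  "node_content R k N A j f r =
     (if j \<in> {1..k} then f j r
      else if j = k + 1 then finsum R (\<lambda>i. f i r) {1..k}
      else finsum R (\<lambda>i. matT_vec R N (A i) (f i) r) {1..k})"

definition is_MDS_code :: "nat ring \<Rightarrow> nat \<Rightarrow> nat \<Rightarrow> (nat \<Rightarrow> nat \<Rightarrow> nat \<Rightarrow> nat) \<Rightarrow> bool" where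
  "is_MDS_code R k N A \<longleftrightarrow>
     (\<forall>S. S \<subseteq> {1..k+2} \<and> card S = k \<longrightarrow>
       (\<forall>f f'. is_file R k N f \<and> is_file R k N f' \<and>
          (\<forall>j\<in>S. \<forall>r<N. node_content R k N A j f r = node_content R k N A j f' r)
          \<longrightarrow> (\<forall>i\<in>{1..k}. \<forall>r<N. f i r = f' i r)))"

text \<open>Total download: (k+1)*N/2 symbols.\<close>
definition download ::
  "nat ring \<Rightarrow> nat \<Rightarrow> nat \<Rightarrow> (nat \<Rightarrow> nat \<Rightarrow> nat \<Rightarrow> nat) \<Rightarrow> nat \<Rightarrow> (nat \<Rightarrow> nat \<Rightarrow> nat \<Rightarrow> nat)
     \<Rightarrow> (nat \<Rightarrow> nat \<Rightarrow> nat) \<Rightarrow> nat \<Rightarrow> nat \<Rightarrow> nat" where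
  "download R k N A j S f i t =
     (if i \<in> {1..k+2} - {j} \<and> t < N div 2
      then finsum R (\<lambda>c. S i t c \<otimes>\<^bsub>R\<^esub> node_content R k N A i f c) {..<N}
      else \<zero>\<^bsub>R\<^esub>)"

definition repair_optimal :: "nat ring \<Rightarrow> nat \<Rightarrow> nat \<Rightarrow> (nat \<Rightarrow> nat \<Rightarrow> nat \<Rightarrow> nat) \<Rightarrow> bool" where
  "repair_optimal R k N A \<longleftrightarrow>
     (\<forall>j\<in>{1..k+2}. \<exists>S :: nat \<Rightarrow> nat \<Rightarrow> nat \<Rightarrow> nat.
        (\<forall>i\<in>{1..k+2} - {j}. \<forall>t<N div 2. \<forall>c<N. S i t c \<in> carrier R) \<and>
        (\<forall>f f'. is_file R k N f \<and> is_file R k N f' \<and>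
           (\<forall>i t. download R k N A j S f i t = download R k N A j S f' i t)
           \<longrightarrow> (\<forall>r<N. node_content R k N A j f r = node_content R k N A j f' r)))"

text \<open>X_i = I_{2^(i-1)} (x) blkdiag(I_{N/2^i}, -I_{N/2^i}): diagonal entry at 0-based
  position r is 1 if (r div (N/2^i)) is even, else -1.\<close>
definition Xdiag :: "nat ring \<Rightarrow> nat \<Rightarrow> nat \<Rightarrow> nat \<Rightarrow> nat" where
  "Xdiag R N i r = (if even (r div (N div 2 ^ i)) then \<one>\<^bsub>R\<^esub> else \<ominus>\<^bsub>R\<^esub> \<one>\<^bsub>R\<^esub>)"

definition coding_mats :: "nat ring \<Rightarrow> nat \<Rightarrow> nat \<Rightarrow> (nat \<Rightarrow> nat) \<Rightarrow> (nat \<Rightarrow> nat) \<Rightarrow> nat \<Rightarrow> nat \<Rightarrow> nat \<Rightarrow> nat" where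
  "coding_mats R k N a b i r c =
     (if r = c then (a i \<otimes>\<^bsub>R\<^esub> Xdiag R N i r) \<oplus>\<^bsub>R\<^esub> (b i \<otimes>\<^bsub>R\<^esub> Xdiag R N (k+1) r) \<oplus>\<^bsub>R\<^esub> \<one>\<^bsub>R\<^esub>
      else \<zero>\<^bsub>R\<^esub>)"

end

theory Submission
  imports Defs "HOL-Number_Theory.Residues"
begin

text \<open>Choose nonzero \<open>t\<^sub>1, \<dots>, t\<^sub>k\<close> in a prime field of odd characteristic with \<open>t\<^sub>i\<^sup>2 \<noteq> 1\<close>,
  \<open>t\<^sub>i \<noteq> t\<^sub>j\<close> and \<open>t\<^sub>i t\<^sub>j \<noteq> 1\<close>, and put \<open>a\<^sub>i = (t\<^sub>i - t\<^sub>i\<^sup>-\<^sup>1)/2\<close>, \<open>b\<^sub>i = (t\<^sub>i + t\<^sub>i\<^sup>-\<^sup>1)/2\<close>,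
  so that \<open>a\<^sub>i\<^sup>2 - b\<^sub>i\<^sup>2 = -1\<close>. Every \<open>A\<^sub>i\<close> is diagonal, and its entry at position \<open>r\<close> is
  \<open>\<lambda>\<^sub>i(r) = 1 \<plusminus> w\<close>: the sign is given by bit \<open>0\<close> of \<open>r\<close>, and \<open>w = t\<^sub>i\<close> or \<open>t\<^sub>i\<^sup>-\<^sup>1\<close> according to
  whether bits \<open>0\<close> and \<open>k+1-i\<close> of \<open>r\<close> agree. At each position the parities are \<open>\<Sum> x\<^sub>i\<close> and
  \<open>\<Sum> \<lambda>\<^sub>i x\<^sub>i\<close> with pairwise distinct nonzero \<open>\<lambda>\<^sub>i\<close>, which makes the code MDS.

  For repair, position \<open>r\<close> is paired with \<open>r' = r xor c\<close> and every surviving node sends one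
  linear combination of its two symbols per pair. For systematic node \<open>j\<close> take \<open>c = 2\<^sup>k\<^sup>+\<^sup>1\<^sup>-\<^sup>j\<close>:
  then \<open>\<lambda>\<^sub>i(r') = \<lambda>\<^sub>i(r)\<close> for \<open>i \<noteq> j\<close> but not for \<open>i = j\<close>, so the downloaded pair sums leave two
  independent equations in \<open>x\<^sub>j(r)\<close>, \<open>x\<^sub>j(r')\<close>. For the first parity take \<open>c = 2\<^sup>k\<^sup>+\<^sup>1 - 1\<close>, where
  \<open>\<lambda>\<^sub>i(r) + \<lambda>\<^sub>i(r') = 2\<close>; for the second take \<open>c = 2\<^sup>k\<^sup>+\<^sup>1 - 2\<close>, where \<open>\<lambda>\<^sub>i(r)\<^sup>-\<^sup>1 + \<lambda>\<^sub>i(r')\<^sup>-\<^sup>1 = 1\<close>.\<close>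

section \<open>Prime fields on natural numbers\<close>

definition residue_field :: "nat \<Rightarrow> nat ring" where
  "residue_field p = \<lparr>carrier = {..<p}, monoid.mult = (\<lambda>x y. x * y mod p), one = 1,
     ring.zero = 0, ring.add = (\<lambda>x y. (x + y) mod p)\<rparr>"

lemma field_residue_field:
  assumes p: "Factorial_Ring.prime p"
  shows "field (residue_field p)"
proof -
  have "p > 1" using p prime_gt_1_nat by blast
  have F: "field (residue_ring (int p))"
    by (rule residues_prime.is_field) (unfold_locales, rule p)
  have hom: "nat \<in> ring_hom (residue_ring (int p)) (residue_field p)"
    unfolding ring_hom_def residue_ring_def residue_field_def
    using \<open>p > 1\<close> by (auto simp: nat_mod_distrib nat_mult_distrib nat_add_distrib)
  have "bij_betw nat {0..int p - 1} {..<p}"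
    unfolding bij_betw_def inj_on_def by (auto simp: image_iff intro!: bexI[where x="int _"])
  with hom have iso: "nat \<in> ring_iso (residue_ring (int p)) (residue_field p)"
    unfolding ring_iso_def residue_ring_def residue_field_def by auto
  have "(residue_field p)\<lparr>zero := nat \<zero>\<^bsub>residue_ring (int p)\<^esub>\<rparr> = residue_field p"
    by (simp add: residue_field_def residue_ring_def)
  then show ?thesis
    using field.ring_iso_imp_img_field[OF F iso] by simp
qed

section \<open>Positions as bit strings\<close>

lemma less_power_iff_not_bit: "(x::nat) < 2 ^ n \<longleftrightarrow> (\<forall>m\<ge>n. \<not> bit x m)"
proof
  assume "x < 2 ^ n"
  then show "\<forall>m\<ge>n. \<not> bit x m"
    by (metis bit_take_bit_iff not_le take_bit_nat_eq_self_iff)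
next
  assume "\<forall>m\<ge>n. \<not> bit x m"
  then have "take_bit n x = x"
    by (intro bit_eqI) (auto simp: bit_take_bit_iff not_le)
  then show "x < 2 ^ n"
    using take_bit_nat_eq_self_iff by blast
qed

lemma xor_less_power: "(r::nat) < 2 ^ n \<Longrightarrow> c < 2 ^ n \<Longrightarrow> xor r c < 2 ^ n"
  by (auto simp: less_power_iff_not_bit bit_xor_iff)

lemma Xdiag_power_of_two:
  assumes "i \<le> n"
  shows "Xdiag R (2 ^ n) i r = (if bit r (n - i) then \<ominus>\<^bsub>R\<^esub> \<one>\<^bsub>R\<^esub> else \<one>\<^bsub>R\<^esub>)"
proof -
  have "(2::nat) ^ n div 2 ^ i = 2 ^ (n - i)"
    using assms by (simp add: power_diff)
  then show ?thesis
    unfolding Xdiag_def by (simp add: bit_iff_odd)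
qed

lemma involution_transversal:
  fixes \<rho> :: "nat \<Rightarrow> nat" and P :: "nat \<Rightarrow> bool"
  assumes \<rho>_less: "\<And>r. r < N \<Longrightarrow> \<rho> r < N"
    and \<rho>_\<rho>: "\<And>r. r < N \<Longrightarrow> \<rho> (\<rho> r) = r"
    and P_\<rho>: "\<And>r. r < N \<Longrightarrow> P (\<rho> r) \<longleftrightarrow> \<not> P r"
  obtains e where "\<And>t. t < N div 2 \<Longrightarrow> e t < N \<and> P (e t)"
    and "\<And>r. r < N \<Longrightarrow> \<exists>t<N div 2. r = e t \<or> r = \<rho> (e t)"
proof -
  define Rep where "Rep = {r. r < N \<and> P r}"
  have fin: "finite Rep"
    unfolding Rep_def by auto
  have "inj_on \<rho> Rep"
    by (rule inj_on_inverseI[of _ \<rho>]) (simp add: Rep_def \<rho>_\<rho>)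
  then have card_image: "card (\<rho> ` Rep) = card Rep"
    by (rule card_image)
  have covers: "r \<in> Rep \<or> \<rho> r \<in> Rep" if "r < N" for r
    using that P_\<rho> \<rho>_less unfolding Rep_def by auto
  have "{..<N} = Rep \<union> \<rho> ` Rep"
  proof (intro equalityI subsetI)
    fix r assume "r \<in> {..<N}"
    then show "r \<in> Rep \<union> \<rho> ` Rep"
      using covers[of r] \<rho>_\<rho>[of r] by (metis UnI1 UnI2 image_eqI lessThan_iff)
  qed (use \<rho>_less in \<open>auto simp: Rep_def\<close>)
  moreover have "Rep \<inter> \<rho> ` Rep = {}"
    using P_\<rho> unfolding Rep_def by auto
  ultimately have "N = card Rep + card (\<rho> ` Rep)"
    using card_Un_disjoint[OF fin finite_imageI[OF fin]] by (metis card_lessThan)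
  then have card_Rep: "card Rep = N div 2"
    using card_image by simp
  obtain e where "bij_betw e {0..<card Rep} Rep"
    using ex_bij_betw_nat_finite[OF fin] by blast
  then have e_image: "e ` {..<N div 2} = Rep"
    using card_Rep by (simp add: bij_betw_def atLeast0LessThan)
  show thesis
  proof
    show "e t < N \<and> P (e t)" if "t < N div 2" for t
      using that e_image unfolding Rep_def by auto
    show "\<exists>t<N div 2. r = e t \<or> r = \<rho> (e t)" if "r < N" for r
      using covers[OF that] \<rho>_\<rho>[OF that] e_image by (metis imageE lessThan_iff)
  qed
qed

context ring
begin

lemma finsum_diff:
  assumes "finite A" "f \<in> A \<rightarrow> carrier R" "g \<in> A \<rightarrow> carrier R"
  shows "(\<Oplus>i\<in>A. f i \<ominus> g i) = finsum R f A \<ominus> finsum R g A"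
proof -
  have "(\<Oplus>i\<in>A. \<ominus> g i) = (\<Oplus>i\<in>A. \<ominus> \<one> \<otimes> g i)"
    using assms(3) by (intro finsum_cong') (simp_all add: l_minus funcset_mem[OF assms(3)])
  also have "\<dots> = \<ominus> finsum R g A"
    using finsum_rdistr[OF assms(1) _ assms(3), of "\<ominus> \<one>"] assms(3)
    by (simp add: l_minus finsum_closed)
  finally have "(\<Oplus>i\<in>A. \<ominus> g i) = \<ominus> finsum R g A" .
  then show ?thesis
    using finsum_addf[of f A "\<lambda>i. \<ominus> g i"] assms by (simp add: minus_eq Pi_def)
qed

lemma finsum_eq_single:
  assumes "finite A" "j \<in> A" "g \<in> A \<rightarrow> carrier R" "\<And>i. i \<in> A - {j} \<Longrightarrow> g i = \<zero>"
  shows "finsum R g A = g j"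
proof -
  have "finsum R g A = finsum R g {j}"
    using add.finprod_mono_neutral_cong_right[of A "{j}" g g] assms by auto
  also have "\<dots> = g j"
    using finsum_insert[of "{}" j g] funcset_mem[OF assms(3,2)] by simp
  finally show ?thesis .
qed

end

context domain
begin

lemma zero_if_sum_and_weighted_sum_zero:
  assumes closed: "x \<in> carrier R" "y \<in> carrier R" "a \<in> carrier R" "b \<in> carrier R"
    and sum: "x \<oplus> y = \<zero>" and weighted: "a \<otimes> x \<oplus> b \<otimes> y = \<zero>" and "a \<noteq> b"
  shows "x = \<zero> \<and> y = \<zero>"
proof -
  have "(a \<ominus> b) \<otimes> x = (a \<otimes> x \<oplus> b \<otimes> y) \<ominus> b \<otimes> (x \<oplus> y)"
    using closed by algebra
  then have "(a \<ominus> b) \<otimes> x = \<zero>"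
    using sum weighted closed by simp
  moreover have "a \<ominus> b \<noteq> \<zero>"
    using \<open>a \<noteq> b\<close> closed r_right_minus_eq by blast
  ultimately have "x = \<zero>"
    using closed integral by blast
  then show ?thesis
    using sum closed by simp
qed

lemma one_plus_minus_nonzero:
  assumes "w \<in> carrier R" "w \<otimes> w \<noteq> \<one>"
  shows "\<one> \<oplus> w \<noteq> \<zero>" "\<one> \<ominus> w \<noteq> \<zero>"
proof -
  have "(\<one> \<oplus> w) \<otimes> (\<one> \<ominus> w) = \<one> \<ominus> w \<otimes> w"
    using assms(1) by algebra
  moreover have "\<one> \<ominus> w \<otimes> w \<noteq> \<zero>"
    using assms r_right_minus_eq[of \<one> "w \<otimes> w"] by auto
  ultimately show "\<one> \<oplus> w \<noteq> \<zero>" "\<one> \<ominus> w \<noteq> \<zero>"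
    using integral_iff[of "\<one> \<oplus> w" "\<one> \<ominus> w"] assms(1) by auto
qed

end

context field
begin

lemma inv_add_inv_eq_one:
  assumes "x \<in> carrier R" "x \<noteq> \<zero>" "y \<in> carrier R" "y \<noteq> \<zero>" and "x \<oplus> y = x \<otimes> y"
  shows "inv x \<oplus> inv y = \<one>"
proof -
  have units: "x \<in> Units R" "y \<in> Units R"
    using assms field_Units by auto
  then have closed: "inv x \<in> carrier R" "inv y \<in> carrier R"
    by auto
  have "inv x \<oplus> inv y = inv y \<otimes> (inv x \<otimes> x) \<oplus> inv x \<otimes> (inv y \<otimes> y)"
    using units closed by (simp add: add.m_comm)
  also have "\<dots> = (inv x \<otimes> inv y) \<otimes> (x \<oplus> y)"
    using assms(1,3) closed by algebra
  also have "\<dots> = (inv x \<otimes> x) \<otimes> (inv y \<otimes> y)"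
    using assms(1,3) closed by (simp only: \<open>x \<oplus> y = x \<otimes> y\<close>) algebra
  also have "\<dots> = \<one>"
    using units by simp
  finally show ?thesis .
qed

end

section \<open>Storage codes\<close>

locale storage_code = ring R for R :: "nat ring" (structure) +
  fixes k N :: nat and A :: "nat \<Rightarrow> nat \<Rightarrow> nat \<Rightarrow> nat"
  assumes A_closed: "\<And>i c r. i \<in> {1..k} \<Longrightarrow> A i c r \<in> carrier R"
begin

abbreviation node :: "nat \<Rightarrow> (nat \<Rightarrow> nat \<Rightarrow> nat) \<Rightarrow> nat \<Rightarrow> nat" where
  "node \<equiv> node_content R k N A"

lemma file_closed: "is_file R k N f \<Longrightarrow> i \<in> {1..k} \<Longrightarrow> r < N \<Longrightarrow> f i r \<in> carrier R"
  unfolding is_file_def by auto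

lemma is_file_diff:
  "is_file R k N f \<Longrightarrow> is_file R k N f' \<Longrightarrow> is_file R k N (\<lambda>i r. f i r \<ominus> f' i r)"
  unfolding is_file_def by auto

lemma node_systematic: "j \<in> {1..k} \<Longrightarrow> node j f r = f j r"
  unfolding node_content_def by simp

lemma node_parity1: "node (k+1) f r = (\<Oplus>i\<in>{1..k}. f i r)"
  unfolding node_content_def by simp

lemma node_parity2: "node (k+2) f r = (\<Oplus>i\<in>{1..k}. matT_vec R N (A i) (f i) r)"
  unfolding node_content_def by simp

lemma matT_vec_closed:
  "is_file R k N f \<Longrightarrow> i \<in> {1..k} \<Longrightarrow> matT_vec R N (A i) (f i) r \<in> carrier R"
  unfolding matT_vec_def using A_closed file_closed by (auto intro!: finsum_closed)

lemma node_closed: "is_file R k N f \<Longrightarrow> r < N \<Longrightarrow> node j f r \<in> carrier R"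
  using matT_vec_closed file_closed unfolding node_content_def by (auto intro!: finsum_closed)

lemma matT_vec_diff:
  assumes f: "is_file R k N f" and f': "is_file R k N f'" and i: "i \<in> {1..k}"
  shows "matT_vec R N (A i) (\<lambda>c. f i c \<ominus> f' i c) r
    = matT_vec R N (A i) (f i) r \<ominus> matT_vec R N (A i) (f' i) r"
proof -
  have "matT_vec R N (A i) (\<lambda>c. f i c \<ominus> f' i c) r
      = (\<Oplus>c\<in>{..<N}. A i c r \<otimes> f i c \<ominus> A i c r \<otimes> f' i c)"
    unfolding matT_vec_def
  proof (intro finsum_cong')
    fix c assume "c \<in> {..<N}"
    then show "A i c r \<otimes> (f i c \<ominus> f' i c) = A i c r \<otimes> f i c \<ominus> A i c r \<otimes> f' i c"
      using A_closed[OF i] file_closed[OF f i] file_closed[OF f' i] by (simp add: r_minus minus_eq r_distr)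
  qed (use A_closed[OF i] file_closed[OF f i] file_closed[OF f' i] in auto)
  also have "\<dots> = matT_vec R N (A i) (f i) r \<ominus> matT_vec R N (A i) (f' i) r"
    unfolding matT_vec_def
    using A_closed[OF i] file_closed[OF f i] file_closed[OF f' i] by (intro finsum_diff) auto
  finally show ?thesis .
qed

lemma node_diff:
  assumes f: "is_file R k N f" and f': "is_file R k N f'" and "r < N"
  shows "node j (\<lambda>i r. f i r \<ominus> f' i r) r = node j f r \<ominus> node j f' r"
proof -
  have "(\<Oplus>i\<in>{1..k}. f i r \<ominus> f' i r) = (\<Oplus>i\<in>{1..k}. f i r) \<ominus> (\<Oplus>i\<in>{1..k}. f' i r)"
    using file_closed[OF f] file_closed[OF f'] \<open>r < N\<close> by (intro finsum_diff) auto
  moreover have "(\<Oplus>i\<in>{1..k}. matT_vec R N (A i) (\<lambda>c. f i c \<ominus> f' i c) r)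
    = (\<Oplus>i\<in>{1..k}. matT_vec R N (A i) (f i) r \<ominus> matT_vec R N (A i) (f' i) r)"
    using matT_vec_closed[OF f] matT_vec_closed[OF f']
    by (intro finsum_cong') (auto simp: matT_vec_diff[OF f f'])
  moreover have "\<dots> = (\<Oplus>i\<in>{1..k}. matT_vec R N (A i) (f i) r) \<ominus> (\<Oplus>i\<in>{1..k}. matT_vec R N (A i) (f' i) r)"
    using matT_vec_closed[OF f] matT_vec_closed[OF f'] by (intro finsum_diff) auto
  ultimately show ?thesis
    unfolding node_content_def by simp
qed

lemma download_closed:
  assumes "\<forall>i\<in>{1..k+2} - {j}. \<forall>t<N div 2. \<forall>c<N. S i t c \<in> carrier R" and "is_file R k N f"
  shows "download R k N A j S f i t \<in> carrier R"
  using assms node_closed unfolding download_def by (auto intro!: finsum_closed)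

lemma download_diff:
  assumes S: "\<forall>i\<in>{1..k+2} - {j}. \<forall>t<N div 2. \<forall>c<N. S i t c \<in> carrier R"
    and f: "is_file R k N f" and f': "is_file R k N f'"
  shows "download R k N A j S (\<lambda>i r. f i r \<ominus> f' i r) i t
    = download R k N A j S f i t \<ominus> download R k N A j S f' i t"
proof (cases "i \<in> {1..k+2} - {j} \<and> t < N div 2")
  case True
  have "(\<Oplus>c\<in>{..<N}. S i t c \<otimes> node i (\<lambda>i r. f i r \<ominus> f' i r) c)
      = (\<Oplus>c\<in>{..<N}. S i t c \<otimes> node i f c \<ominus> S i t c \<otimes> node i f' c)"
  proof (intro finsum_cong')
    fix c assume "c \<in> {..<N}"
    then have c: "c < N"
      by simp
    show "S i t c \<otimes> node i (\<lambda>i r. f i r \<ominus> f' i r) c = S i t c \<otimes> node i f c \<ominus> S i t c \<otimes> node i f' c"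
      unfolding node_diff[OF f f' c] using S True c node_closed[OF f c] node_closed[OF f' c]
      by (simp add: r_minus minus_eq r_distr)
  qed (use S True node_closed[OF f] node_closed[OF f'] in auto)
  also have "\<dots> = (\<Oplus>c\<in>{..<N}. S i t c \<otimes> node i f c) \<ominus> (\<Oplus>c\<in>{..<N}. S i t c \<otimes> node i f' c)"
    using S True node_closed[OF f] node_closed[OF f'] by (intro finsum_diff) auto
  finally show ?thesis
    using True unfolding download_def by simp
next
  case False
  then show ?thesis
    unfolding download_def by (auto simp: minus_eq)
qed

text \<open>Both properties are statements about a linear map, so it suffices to show that its
  kernel is trivial; this is applied to the difference of two files.\<close>

lemma is_MDS_codeI:
  assumes "\<And>S d. S \<subseteq> {1..k+2} \<Longrightarrow> card S = k \<Longrightarrow> is_file R k N d \<Longrightarrow>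
      \<forall>j\<in>S. \<forall>r<N. node j d r = \<zero> \<Longrightarrow> \<forall>i\<in>{1..k}. \<forall>r<N. d i r = \<zero>"
  shows "is_MDS_code R k N A"
  unfolding is_MDS_code_def
proof (intro allI impI ballI)
  fix S f f' i r
  assume S: "S \<subseteq> {1..k+2} \<and> card S = k"
    and H: "is_file R k N f \<and> is_file R k N f' \<and>
      (\<forall>j\<in>S. \<forall>r<N. node j f r = node j f' r)"
    and i: "i \<in> {1..k}" and r: "r < N"
  then have f: "is_file R k N f" and f': "is_file R k N f'"
    by auto
  have "\<forall>j\<in>S. \<forall>r<N. node j (\<lambda>i r. f i r \<ominus> f' i r) r = \<zero>"
    using H node_closed[OF f'] by (simp add: node_diff[OF f f'])
  then have "\<forall>i\<in>{1..k}. \<forall>r<N. f i r \<ominus> f' i r = \<zero>"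
    using S by (intro assms is_file_diff[OF f f']) auto
  then have "f i r \<ominus> f' i r = \<zero>"
    using i r by simp
  then show "f i r = f' i r"
    using file_closed[OF f i r] file_closed[OF f' i r] r_right_minus_eq by blast
qed

definition repairable :: "nat \<Rightarrow> bool" where
  "repairable j \<longleftrightarrow> (\<exists>S. (\<forall>i\<in>{1..k+2} - {j}. \<forall>t<N div 2. \<forall>c<N. S i t c \<in> carrier R) \<and>
     (\<forall>d. is_file R k N d \<and> (\<forall>i t. download R k N A j S d i t = \<zero>) \<longrightarrow> (\<forall>r<N. node j d r = \<zero>)))"

lemma repair_optimalI:
  assumes "\<And>j. j \<in> {1..k+2} \<Longrightarrow> repairable j"
  shows "repair_optimal R k N A"
  unfolding repair_optimal_def
proof
  fix j assume "j \<in> {1..k+2}"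
  then obtain S
    where S: "\<forall>i\<in>{1..k+2} - {j}. \<forall>t<N div 2. \<forall>c<N. S i t c \<in> carrier R"
      and kernel: "\<forall>d. is_file R k N d \<and> (\<forall>i t. download R k N A j S d i t = \<zero>) \<longrightarrow>
        (\<forall>r<N. node j d r = \<zero>)"
    using assms unfolding repairable_def by blast
  have "node j f r = node j f' r"
    if f: "is_file R k N f" and f': "is_file R k N f'" and r: "r < N"
      and H: "\<forall>i t. download R k N A j S f i t = download R k N A j S f' i t" for f f' r
  proof -
    have "download R k N A j S (\<lambda>i r. f i r \<ominus> f' i r) i t = \<zero>" for i t
      using H download_closed[OF S f', of i t] r_right_minus_eq
      by (simp add: download_diff[OF S f f'])
    then have "node j (\<lambda>i r. f i r \<ominus> f' i r) r = \<zero>"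
      using kernel is_file_diff[OF f f'] r by blast
    then have "node j f r \<ominus> node j f' r = \<zero>"
      by (simp add: node_diff[OF f f' r])
    then show ?thesis
      using node_closed[OF f r] node_closed[OF f' r] r_right_minus_eq by blast
  qed
  with S show "\<exists>S. (\<forall>i\<in>{1..k+2} - {j}. \<forall>t<N div 2. \<forall>c<N. S i t c \<in> carrier R) \<and>
      (\<forall>f f'. is_file R k N f \<and> is_file R k N f' \<and>
        (\<forall>i t. download R k N A j S f i t = download R k N A j S f' i t)
        \<longrightarrow> (\<forall>r<N. node j f r = node j f' r))"
    by blast
qed

lemma finsum_two_point:
  assumes "r < N" "r' < N" "r \<noteq> r'" "\<alpha> \<in> carrier R" "\<beta> \<in> carrier R"
    and x: "\<And>c. c < N \<Longrightarrow> x c \<in> carrier R"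
  shows "(\<Oplus>c\<in>{..<N}. (if c = r then \<alpha> else if c = r' then \<beta> else \<zero>) \<otimes> x c)
    = \<alpha> \<otimes> x r \<oplus> \<beta> \<otimes> x r'"
proof -
  have "(\<Oplus>c\<in>{..<N}. (if c = r then \<alpha> else if c = r' then \<beta> else \<zero>) \<otimes> x c)
      = (\<Oplus>c\<in>{..<N}. (if r = c then \<alpha> \<otimes> x r else \<zero>) \<oplus> (if r' = c then \<beta> \<otimes> x r' else \<zero>))"
    by (rule finsum_cong) (use assms in \<open>auto simp: simp_implies_def\<close>)
  also have "\<dots> = (\<Oplus>c\<in>{..<N}. if r = c then \<alpha> \<otimes> x r else \<zero>)
      \<oplus> (\<Oplus>c\<in>{..<N}. if r' = c then \<beta> \<otimes> x r' else \<zero>)"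
    by (rule finsum_addf) (use assms in auto)
  also have "\<dots> = \<alpha> \<otimes> x r \<oplus> \<beta> \<otimes> x r'"
    using finsum_singleton[of r "{..<N}" "\<lambda>_. \<alpha> \<otimes> x r"]
      finsum_singleton[of r' "{..<N}" "\<lambda>_. \<beta> \<otimes> x r'"] assms by auto
  finally show ?thesis .
qed

text \<open>Node \<open>i\<close> sends, for each pair \<open>{r, \<rho> r}\<close>, the single combination
  \<open>\<alpha> i r \<otimes> node i r \<oplus> \<beta> i r \<otimes> node i (\<rho> r)\<close>, i.e. \<open>N div 2\<close> symbols in total.\<close>

lemma repair_by_pairing:
  fixes \<rho> :: "nat \<Rightarrow> nat" and P :: "nat \<Rightarrow> bool" and \<alpha> \<beta> :: "nat \<Rightarrow> nat \<Rightarrow> nat"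
  assumes \<rho>_less: "\<And>r. r < N \<Longrightarrow> \<rho> r < N" and \<rho>_\<rho>: "\<And>r. r < N \<Longrightarrow> \<rho> (\<rho> r) = r"
    and P_\<rho>: "\<And>r. r < N \<Longrightarrow> P (\<rho> r) \<longleftrightarrow> \<not> P r"
    and coeffs_closed: "\<And>i r. i \<in> {1..k+2} - {j} \<Longrightarrow> r < N \<Longrightarrow> \<alpha> i r \<in> carrier R \<and> \<beta> i r \<in> carrier R"
    and recover: "\<And>d r. is_file R k N d \<Longrightarrow> r < N \<Longrightarrow> P r \<Longrightarrow>
      \<forall>i\<in>{1..k+2} - {j}. \<alpha> i r \<otimes> node i d r \<oplus> \<beta> i r \<otimes> node i d (\<rho> r) = \<zero> \<Longrightarrow>
      node j d r = \<zero> \<and> node j d (\<rho> r) = \<zero>"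
  shows "repairable j"
proof -
  obtain e where e: "\<And>t. t < N div 2 \<Longrightarrow> e t < N \<and> P (e t)"
    and e_covers: "\<And>r. r < N \<Longrightarrow> \<exists>t<N div 2. r = e t \<or> r = \<rho> (e t)"
    using involution_transversal[of N \<rho> P, OF \<rho>_less \<rho>_\<rho> P_\<rho>] by blast
  define S where "S i t c =
    (if c = e t then \<alpha> i (e t) else if c = \<rho> (e t) then \<beta> i (e t) else \<zero>)" for i t c
  have download: "download R k N A j S d i t
      = \<alpha> i (e t) \<otimes> node i d (e t) \<oplus> \<beta> i (e t) \<otimes> node i d (\<rho> (e t))"
    if d: "is_file R k N d" and i: "i \<in> {1..k+2} - {j}" and t: "t < N div 2" for d i t
  proof -
    have "e t < N" "e t \<noteq> \<rho> (e t)"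
      using e[OF t] P_\<rho>[of "e t"] by auto
    have "download R k N A j S d i t = (\<Oplus>c\<in>{..<N}. S i t c \<otimes> node i d c)"
      unfolding download_def using i t by simp
    also have "\<dots> = \<alpha> i (e t) \<otimes> node i d (e t) \<oplus> \<beta> i (e t) \<otimes> node i d (\<rho> (e t))"
      unfolding S_def
      by (rule finsum_two_point) (use \<open>e t < N\<close> \<open>e t \<noteq> \<rho> (e t)\<close> \<rho>_less coeffs_closed[OF i] node_closed[OF d] in auto)
    finally show ?thesis .
  qed
  show ?thesis
    unfolding repairable_def
  proof (intro exI conjI allI impI ballI)
    fix i t c assume "i \<in> {1..k+2} - {j}" "t < N div 2" "c < N"
    then show "S i t c \<in> carrier R"
      unfolding S_def using coeffs_closed e \<rho>_less by auto
  next
    fix d r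
    assume H: "is_file R k N d \<and> (\<forall>i t. download R k N A j S d i t = \<zero>)" and "r < N"
    then obtain t where t: "t < N div 2" and r: "r = e t \<or> r = \<rho> (e t)"
      using e_covers by blast
    have "node j d (e t) = \<zero> \<and> node j d (\<rho> (e t)) = \<zero>"
      using H e[OF t] download[of d _ t] t by (intro recover) auto
    then show "node j d r = \<zero>"
      using r by auto
  qed
qed

end

section \<open>Codes with diagonal coding matrices\<close>

lemma card_missing_systematic:
  assumes "S \<subseteq> {1..k+2}" "card S = k"
  shows "card ({1..k} - S) = card (S \<inter> {k+1, k+2})"
proof -
  have "finite S"
    using assms(1) finite_subset by blast
  have "S = (S \<inter> {1..k}) \<union> (S \<inter> {k+1, k+2})"
    using assms(1) by auto
  then have "k = card (S \<inter> {1..k}) + card (S \<inter> {k+1, k+2})"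
    using assms(2) card_Un_disjoint[of "S \<inter> {1..k}" "S \<inter> {k+1, k+2}"] \<open>finite S\<close> by fastforce
  moreover have "card ({1..k} - S) = k - card (S \<inter> {1..k})"
    using card_Diff_subset_Int[of "{1..k}" S] by (simp add: Int_commute)
  ultimately show ?thesis
    by simp
qed

locale diagonal_code = storage_code R k N A + field R
  for R :: "nat ring" (structure) and k N :: nat and A :: "nat \<Rightarrow> nat \<Rightarrow> nat \<Rightarrow> nat" +
  fixes D :: "nat \<Rightarrow> nat \<Rightarrow> nat"
  assumes A_diagonal: "\<And>i c r. i \<in> {1..k} \<Longrightarrow> A i c r = (if c = r then D i r else \<zero>)"
begin

lemma D_closed: "i \<in> {1..k} \<Longrightarrow> D i r \<in> carrier R"
  using A_closed[of i r r] A_diagonal[of i r r] by simp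

lemma matT_vec_diagonal:
  assumes i: "i \<in> {1..k}" and r: "r < N" and v: "\<And>c. c < N \<Longrightarrow> v c \<in> carrier R"
  shows "matT_vec R N (A i) v r = D i r \<otimes> v r"
proof -
  have "matT_vec R N (A i) v r = (\<Oplus>c\<in>{..<N}. if r = c then D i r \<otimes> v r else \<zero>)"
    unfolding matT_vec_def using i v D_closed[OF i] by (intro finsum_cong') (auto simp: A_diagonal)
  also have "\<dots> = D i r \<otimes> v r"
    using finsum_singleton[of r "{..<N}" "\<lambda>_. D i r \<otimes> v r"] r v[OF r] D_closed[OF i] by auto
  finally show ?thesis .
qed

lemma node_parity2_diagonal:
  "is_file R k N d \<Longrightarrow> r < N \<Longrightarrow> node (k+2) d r = (\<Oplus>i\<in>{1..k}. D i r \<otimes> d i r)"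
  unfolding node_parity2 using file_closed D_closed by (intro finsum_cong') (auto simp: matT_vec_diagonal)

lemma node_parity1_add:
  assumes "is_file R k N d" "r < N" "r' < N"
  shows "node (k+1) d r \<oplus> node (k+1) d r' = (\<Oplus>i\<in>{1..k}. d i r \<oplus> d i r')"
  using assms file_closed node_parity1[of d r] node_parity1[of d r'] by (simp add: finsum_addf Pi_iff)

lemma node_parity2_add:
  assumes d: "is_file R k N d" and "r < N" "r' < N"
  shows "node (k+2) d r \<oplus> node (k+2) d r' = (\<Oplus>i\<in>{1..k}. D i r \<otimes> d i r \<oplus> D i r' \<otimes> d i r')"
  using assms file_closed[OF d] D_closed node_parity2_diagonal[OF d, of r] node_parity2_diagonal[OF d, of r']
  by (simp add: finsum_addf Pi_iff)

lemma zero_on_erased_systematic: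
  assumes J: "J \<subseteq> {1..k}" "card J = card (S \<inter> {k+1, k+2})" and d: "is_file R k N d" and r: "r < N"
    and nonzero: "\<And>i. i \<in> {1..k} \<Longrightarrow> D i r \<noteq> \<zero>"
    and distinct: "\<And>i i'. i \<in> {1..k} \<Longrightarrow> i' \<in> {1..k} \<Longrightarrow> i \<noteq> i' \<Longrightarrow> D i r \<noteq> D i' r"
    and sum: "k+1 \<in> S \<Longrightarrow> (\<Oplus>i\<in>J. d i r) = \<zero>"
    and weighted: "k+2 \<in> S \<Longrightarrow> (\<Oplus>i\<in>J. D i r \<otimes> d i r) = \<zero>"
    and "i \<in> J"
  shows "d i r = \<zero>"
proof -
  have i: "i \<in> {1..k}" and "finite J"
    using J \<open>i \<in> J\<close> finite_subset by auto
  have closed: "d i r \<in> carrier R" "D i r \<otimes> d i r \<in> carrier R" if "i \<in> {1..k}" for i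
    using that file_closed[OF d _ r] D_closed by auto
  have single: "J = {i}" if "card J = 1"
    using that \<open>i \<in> J\<close> card_1_singletonE[of J] by blast
  consider "S \<inter> {k+1, k+2} = {}" | "S \<inter> {k+1, k+2} = {k+1}" | "S \<inter> {k+1, k+2} = {k+2}"
    | "S \<inter> {k+1, k+2} = {k+1, k+2}"
    by blast
  then show ?thesis
  proof cases
    case 1
    then show ?thesis
      using J \<open>finite J\<close> \<open>i \<in> J\<close> by auto
  next
    case 2
    then have "J = {i}" "k+1 \<in> S"
      using J single by auto
    then show ?thesis
      using sum closed[OF i] by (simp add: finsum_insert)
  next
    case 3
    then have "J = {i}" "k+2 \<in> S"
      using J single by auto
    then have "D i r \<otimes> d i r = \<zero>"
      using weighted closed[OF i] by (simp add: finsum_insert)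
    then show ?thesis
      using integral nonzero[OF i] D_closed[OF i] closed[OF i] by blast
  next
    case 4
    then have "card J = 2"
      using J by simp
    then obtain x y where xy: "J = {x, y}" "x \<noteq> y"
      by (meson card_2_iff)
    define i' where "i' = (if x = i then y else x)"
    have i': "J = {i, i'}" "i' \<noteq> i" "i' \<in> {1..k}"
      using xy J \<open>i \<in> J\<close> unfolding i'_def by auto
    have "d i r \<oplus> d i' r = \<zero>" "D i r \<otimes> d i r \<oplus> D i' r \<otimes> d i' r = \<zero>"
      using sum weighted 4 i' closed[OF i] closed[OF \<open>i' \<in> {1..k}\<close>] by (auto simp: finsum_insert)
    then show ?thesis
      using zero_if_sum_and_weighted_sum_zero[OF closed(1)[OF i] closed(1)[OF \<open>i' \<in> {1..k}\<close>]
          D_closed[OF i] D_closed[OF \<open>i' \<in> {1..k}\<close>]] distinct[OF i \<open>i' \<in> {1..k}\<close>] i'(2)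
      by auto
  qed
qed

text \<open>At a single position the code is a \<open>(k+2, k)\<close> code with parity checks \<open>\<Sum> x\<^sub>i\<close> and
  \<open>\<Sum> D\<^sub>i x\<^sub>i\<close>; erasing two systematic symbols leaves a Vandermonde system in the distinct \<open>D\<^sub>i\<close>.\<close>

lemma zero_if_nodes_zero_at:
  assumes S: "S \<subseteq> {1..k+2}" "card S = k" and d: "is_file R k N d" and r: "r < N"
    and nonzero: "\<And>i. i \<in> {1..k} \<Longrightarrow> D i r \<noteq> \<zero>"
    and distinct: "\<And>i i'. i \<in> {1..k} \<Longrightarrow> i' \<in> {1..k} \<Longrightarrow> i \<noteq> i' \<Longrightarrow> D i r \<noteq> D i' r"
    and zero: "\<And>j. j \<in> S \<Longrightarrow> node j d r = \<zero>"
    and i: "i \<in> {1..k}"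
  shows "d i r = \<zero>"
proof -
  define J where "J = {1..k} - S"
  have J: "J \<subseteq> {1..k}" "finite J" "card J = card (S \<inter> {k+1, k+2})"
    unfolding J_def using card_missing_systematic[OF S] by auto
  have outside: "d i r = \<zero>" if "i \<in> {1..k} - J" for i
    using that zero[of i] node_systematic[of i] unfolding J_def by auto
  have closed: "d i r \<in> carrier R" "D i r \<otimes> d i r \<in> carrier R" if "i \<in> {1..k}" for i
    using that file_closed[OF d _ r] D_closed by auto
  have sum: "(\<Oplus>i\<in>J. d i r) = \<zero>" if "k+1 \<in> S"
  proof -
    have "(\<Oplus>i\<in>{1..k}. d i r) = (\<Oplus>i\<in>J. d i r)"
      by (rule add.finprod_mono_neutral_cong_right) (use J outside closed in auto)
    then show ?thesis
      using zero[OF that] node_parity1[of d r] by simp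
  qed
  have weighted: "(\<Oplus>i\<in>J. D i r \<otimes> d i r) = \<zero>" if "k+2 \<in> S"
  proof -
    have "(\<Oplus>i\<in>{1..k}. D i r \<otimes> d i r) = (\<Oplus>i\<in>J. D i r \<otimes> d i r)"
      by (rule add.finprod_mono_neutral_cong_right) (use J outside closed D_closed in auto)
    then show ?thesis
      using zero[OF that] node_parity2_diagonal[OF d r] by simp
  qed
  show ?thesis
  proof (cases "i \<in> J")
    case True
    show ?thesis
      using zero_on_erased_systematic[OF J(1,3) d r nonzero distinct sum weighted True] .
  next
    case False
    then show ?thesis
      using outside i by blast
  qed
qed

lemma is_MDS_code_diagonal:
  assumes nonzero: "\<And>i r. i \<in> {1..k} \<Longrightarrow> r < N \<Longrightarrow> D i r \<noteq> \<zero>"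
    and distinct: "\<And>i i' r. i \<in> {1..k} \<Longrightarrow> i' \<in> {1..k} \<Longrightarrow> i \<noteq> i' \<Longrightarrow> r < N \<Longrightarrow> D i r \<noteq> D i' r"
  shows "is_MDS_code R k N A"
proof (rule is_MDS_codeI, intro ballI allI impI)
  fix S d i r
  assume S: "S \<subseteq> {1..k+2}" "card S = k" and d: "is_file R k N d"
    and zero: "\<forall>j\<in>S. \<forall>r<N. node j d r = \<zero>" and "i \<in> {1..k}" "r < N"
  then show "d i r = \<zero>"
    using zero_if_nodes_zero_at[OF S d \<open>r < N\<close> nonzero distinct] by blast
qed

end

section \<open>The coding matrices\<close>

definition half :: "nat ring \<Rightarrow> nat" where
  "half R = inv\<^bsub>R\<^esub> (\<one>\<^bsub>R\<^esub> \<oplus>\<^bsub>R\<^esub> \<one>\<^bsub>R\<^esub>)"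

definition a_coeff :: "nat ring \<Rightarrow> (nat \<Rightarrow> nat) \<Rightarrow> nat \<Rightarrow> nat" where
  "a_coeff R t i = (t i \<ominus>\<^bsub>R\<^esub> inv\<^bsub>R\<^esub> t i) \<otimes>\<^bsub>R\<^esub> half R"

definition b_coeff :: "nat ring \<Rightarrow> (nat \<Rightarrow> nat) \<Rightarrow> nat \<Rightarrow> nat" where
  "b_coeff R t i = (t i \<oplus>\<^bsub>R\<^esub> inv\<^bsub>R\<^esub> t i) \<otimes>\<^bsub>R\<^esub> half R"

locale code_parameters = field R for R :: "nat ring" (structure) +
  fixes k :: nat and t :: "nat \<Rightarrow> nat"
  assumes t_closed: "\<And>i. i \<in> {1..k} \<Longrightarrow> t i \<in> carrier R"
    and t_nonzero: "\<And>i. i \<in> {1..k} \<Longrightarrow> t i \<noteq> \<zero>"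
    and t_square_ne_one: "\<And>i. i \<in> {1..k} \<Longrightarrow> t i \<otimes> t i \<noteq> \<one>"
    and t_inj: "\<And>i j. i \<in> {1..k} \<Longrightarrow> j \<in> {1..k} \<Longrightarrow> i \<noteq> j \<Longrightarrow> t i \<noteq> t j"
    and t_product_ne_one: "\<And>i j. i \<in> {1..k} \<Longrightarrow> j \<in> {1..k} \<Longrightarrow> i \<noteq> j \<Longrightarrow> t i \<otimes> t j \<noteq> \<one>"
    and two_nonzero: "\<one> \<oplus> \<one> \<noteq> \<zero>"
begin

abbreviation N :: nat where
  "N \<equiv> 2 ^ (k + 1)"

abbreviation A :: "nat \<Rightarrow> nat \<Rightarrow> nat \<Rightarrow> nat" where
  "A \<equiv> coding_mats R k N (a_coeff R t) (b_coeff R t)"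

lemma t_Units: "i \<in> {1..k} \<Longrightarrow> t i \<in> Units R"
  using t_closed t_nonzero field_Units by auto

lemma inv_t_closed: "i \<in> {1..k} \<Longrightarrow> inv t i \<in> carrier R"
  using t_Units by blast

lemma half_closed: "half R \<in> carrier R" and half_double: "half R \<otimes> (\<one> \<oplus> \<one>) = \<one>"
  using two_nonzero field_Units unfolding half_def by auto

lemma a_coeff_closed: "i \<in> {1..k} \<Longrightarrow> a_coeff R t i \<in> carrier R"
  unfolding a_coeff_def using t_closed inv_t_closed half_closed by auto

lemma b_coeff_closed: "i \<in> {1..k} \<Longrightarrow> b_coeff R t i \<in> carrier R"
  unfolding b_coeff_def using t_closed inv_t_closed half_closed by auto

lemma a_coeff_square_minus_b_coeff_square:
  assumes i: "i \<in> {1..k}"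
  shows "a_coeff R t i \<otimes> a_coeff R t i \<ominus> b_coeff R t i \<otimes> b_coeff R t i = \<ominus> \<one>"
proof -
  have closed: "t i \<in> carrier R" "inv t i \<in> carrier R" "half R \<in> carrier R"
    using t_closed[OF i] inv_t_closed[OF i] half_closed by auto
  have "a_coeff R t i \<otimes> a_coeff R t i \<ominus> b_coeff R t i \<otimes> b_coeff R t i
      = \<ominus> ((t i \<otimes> inv t i) \<otimes> (half R \<otimes> (\<one> \<oplus> \<one>)) \<otimes> (half R \<otimes> (\<one> \<oplus> \<one>)))"
    unfolding a_coeff_def b_coeff_def using closed by algebra
  then show ?thesis
    using t_Units[OF i] half_double by simp
qed

definition eig :: "nat \<Rightarrow> nat \<Rightarrow> nat" where
  "eig i r = a_coeff R t i \<otimes> Xdiag R N i r \<oplus> b_coeff R t i \<otimes> Xdiag R N (k+1) r \<oplus> \<one>"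

definition w :: "nat \<Rightarrow> nat \<Rightarrow> nat" where
  "w i r = (if bit r (k+1-i) = bit r 0 then t i else inv t i)"

lemma eig_eq_one_pm_w:
  assumes i: "i \<in> {1..k}"
  shows "eig i r = (if bit r 0 then \<one> \<ominus> w i r else \<one> \<oplus> w i r)"
proof -
  define x y h where "x = t i" and "y = inv t i" and "h = half R"
  have closed: "x \<in> carrier R" "y \<in> carrier R" "h \<in> carrier R"
    unfolding x_def y_def h_def using t_closed[OF i] inv_t_closed[OF i] half_closed by auto
  have two: "\<And>z. z \<in> carrier R \<Longrightarrow> z \<otimes> (h \<otimes> (\<one> \<oplus> \<one>)) = z"
    unfolding h_def using half_double by simp
  have eig: "eig i r = ((x \<ominus> y) \<otimes> h) \<otimes> (if bit r (k+1-i) then \<ominus> \<one> else \<one>)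
      \<oplus> ((x \<oplus> y) \<otimes> h) \<otimes> (if bit r 0 then \<ominus> \<one> else \<one>) \<oplus> \<one>"
    unfolding eig_def a_coeff_def b_coeff_def x_def y_def h_def
    using Xdiag_power_of_two[of i "k+1" R r] Xdiag_power_of_two[of "k+1" "k+1" R r] i by simp
  show ?thesis
  proof (cases "bit r 0"; cases "bit r (k+1-i)")
    assume "bit r 0" "bit r (k+1-i)"
    then have "eig i r = \<one> \<ominus> x \<otimes> (h \<otimes> (\<one> \<oplus> \<one>))"
      unfolding eig using closed by simp algebra
    then show ?thesis
      using \<open>bit r 0\<close> \<open>bit r (k+1-i)\<close> two closed unfolding w_def x_def by simp
  next
    assume "bit r 0" "\<not> bit r (k+1-i)"
    then have "eig i r = \<one> \<ominus> y \<otimes> (h \<otimes> (\<one> \<oplus> \<one>))"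
      unfolding eig using closed by simp algebra
    then show ?thesis
      using \<open>bit r 0\<close> \<open>\<not> bit r (k+1-i)\<close> two closed unfolding w_def y_def by simp
  next
    assume "\<not> bit r 0" "bit r (k+1-i)"
    then have "eig i r = \<one> \<oplus> y \<otimes> (h \<otimes> (\<one> \<oplus> \<one>))"
      unfolding eig using closed by simp algebra
    then show ?thesis
      using \<open>\<not> bit r 0\<close> \<open>bit r (k+1-i)\<close> two closed unfolding w_def y_def by simp
  next
    assume "\<not> bit r 0" "\<not> bit r (k+1-i)"
    then have "eig i r = \<one> \<oplus> x \<otimes> (h \<otimes> (\<one> \<oplus> \<one>))"
      unfolding eig using closed by simp algebra
    then show ?thesis
      using \<open>\<not> bit r 0\<close> \<open>\<not> bit r (k+1-i)\<close> two closed unfolding w_def x_def by simp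
  qed
qed

lemma w_closed: "i \<in> {1..k} \<Longrightarrow> w i r \<in> carrier R"
  unfolding w_def using t_closed inv_t_closed by auto

lemma w_square_ne_one:
  assumes i: "i \<in> {1..k}"
  shows "w i r \<otimes> w i r \<noteq> \<one>"
proof -
  have "inv t i \<otimes> inv t i \<noteq> \<one>"
  proof
    assume "inv t i \<otimes> inv t i = \<one>"
    then have "t i \<otimes> t i = (t i \<otimes> t i) \<otimes> (inv t i \<otimes> inv t i)"
      using t_closed[OF i] by simp
    also have "\<dots> = (t i \<otimes> inv t i) \<otimes> (t i \<otimes> inv t i)"
      using t_closed[OF i] inv_t_closed[OF i] by algebra
    finally show False
      using t_square_ne_one[OF i] t_Units[OF i] by simp
  qed
  then show ?thesis
    unfolding w_def using t_square_ne_one[OF i] by simp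
qed

lemma w_inj:
  assumes i: "i \<in> {1..k}" and j: "j \<in> {1..k}" and "i \<noteq> j"
  shows "w i r \<noteq> w j r"
proof -
  have "t i \<noteq> inv t j" "inv t i \<noteq> t j"
    using t_product_ne_one[OF i j \<open>i \<noteq> j\<close>] t_Units[OF i] t_Units[OF j] t_closed[OF i] m_comm
    by (metis Units_r_inv inv_t_closed[OF i] Units_l_inv)+
  moreover have "inv t i \<noteq> inv t j"
    using t_inj[OF i j \<open>i \<noteq> j\<close>] t_Units[OF i] t_Units[OF j] by (metis Units_inv_inv)
  ultimately show ?thesis
    unfolding w_def using t_inj[OF i j \<open>i \<noteq> j\<close>] by auto
qed

lemma eig_closed: "i \<in> {1..k} \<Longrightarrow> eig i r \<in> carrier R"
  using eig_eq_one_pm_w w_closed by auto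

lemma eig_nonzero: "i \<in> {1..k} \<Longrightarrow> eig i r \<noteq> \<zero>"
  using eig_eq_one_pm_w one_plus_minus_nonzero[OF w_closed w_square_ne_one] by auto

lemma w_eq_eig:
  assumes i: "i \<in> {1..k}"
  shows "w i r = (if bit r 0 then \<one> \<ominus> eig i r else eig i r \<ominus> \<one>)"
proof -
  have "w i r = \<one> \<ominus> (\<one> \<ominus> w i r)" "w i r = (\<one> \<oplus> w i r) \<ominus> \<one>"
    using w_closed[OF i, of r] by algebra+
  then show ?thesis
    using eig_eq_one_pm_w[OF i, of r] by simp
qed

lemma eig_inj:
  assumes "i \<in> {1..k}" "j \<in> {1..k}" "i \<noteq> j"
  shows "eig i r \<noteq> eig j r"
proof
  assume "eig i r = eig j r"
  then have "w i r = w j r"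
    using w_eq_eig[of i r] w_eq_eig[of j r] assms by presburger
  then show False
    using w_inj[OF assms] by blast
qed

end

sublocale code_parameters \<subseteq>
  diagonal_code R k "2 ^ (k + 1)" "coding_mats R k (2 ^ (k + 1)) (a_coeff R t) (b_coeff R t)" eig
proof unfold_locales
  show "A i c r \<in> carrier R" if "i \<in> {1..k}" for i c r
    unfolding coding_mats_def Xdiag_def using that a_coeff_closed b_coeff_closed by auto
  show "A i c r = (if c = r then eig i r else \<zero>)" if "i \<in> {1..k}" for i c r
    unfolding coding_mats_def eig_def by simp
qed

theorem (in code_parameters) code_is_MDS: "is_MDS_code R k N A"
  using eig_nonzero eig_inj by (intro is_MDS_code_diagonal)

section \<open>Repair\<close>

context code_parameters
begin

lemma eig_cong:
  "i \<in> {1..k} \<Longrightarrow> bit r (k+1-i) = bit r' (k+1-i) \<Longrightarrow> bit r 0 = bit r' 0 \<Longrightarrow> eig i r = eig i r'"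
  using eig_eq_one_pm_w unfolding w_def by simp

lemma eig_ne:
  assumes i: "i \<in> {1..k}" and "bit r (k+1-i) \<noteq> bit r' (k+1-i)" "bit r 0 = bit r' 0"
  shows "eig i r \<noteq> eig i r'"
proof
  have "t i \<noteq> inv t i"
    using t_square_ne_one[OF i] t_Units[OF i] by (metis Units_r_inv)
  then have "w i r \<noteq> w i r'"
    using assms unfolding w_def by auto
  moreover assume "eig i r = eig i r'"
  ultimately show False
    using w_eq_eig[OF i, of r] w_eq_eig[OF i, of r'] assms(3) by (cases "bit r 0") auto
qed

lemma eig_add_eq_two:
  assumes i: "i \<in> {1..k}" and "bit r (k+1-i) \<noteq> bit r' (k+1-i)" "bit r 0 \<noteq> bit r' 0"
  shows "eig i r \<oplus> eig i r' = \<one> \<oplus> \<one>"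
proof -
  have "w i r' = w i r"
    using assms unfolding w_def by auto
  moreover have "(\<one> \<ominus> w i r) \<oplus> (\<one> \<oplus> w i r) = \<one> \<oplus> \<one>" "(\<one> \<oplus> w i r) \<oplus> (\<one> \<ominus> w i r) = \<one> \<oplus> \<one>"
    using w_closed[OF i] by algebra+
  ultimately show ?thesis
    using eig_eq_one_pm_w[OF i, of r] eig_eq_one_pm_w[OF i, of r'] assms(3) by auto
qed

lemma inv_eig_add_eq_one:
  assumes i: "i \<in> {1..k}" and "bit r (k+1-i) \<noteq> bit r' (k+1-i)" "bit r 0 = bit r' 0"
  shows "inv eig i r \<oplus> inv eig i r' = \<one>"
proof -
  have "w i r \<otimes> w i r' = \<one>"
    using assms t_Units[OF i] unfolding w_def by auto
  then have "(\<one> \<ominus> w i r) \<oplus> (\<one> \<ominus> w i r') = (\<one> \<ominus> w i r) \<otimes> (\<one> \<ominus> w i r')"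
    "(\<one> \<oplus> w i r) \<oplus> (\<one> \<oplus> w i r') = (\<one> \<oplus> w i r) \<otimes> (\<one> \<oplus> w i r')"
    using w_closed[OF i, of r] w_closed[OF i, of r'] by algebra+
  then have "eig i r \<oplus> eig i r' = eig i r \<otimes> eig i r'"
    using eig_eq_one_pm_w[OF i, of r] eig_eq_one_pm_w[OF i, of r'] assms(3) by auto
  then show ?thesis
    using inv_add_inv_eq_one eig_closed[OF i] eig_nonzero[OF i] by blast
qed

lemma recover_systematic:
  assumes j: "j \<in> {1..k}" and d: "is_file R k N d" and r: "r < N" "r' < N"
    and bits: "\<And>n. bit r' n \<longleftrightarrow> bit r n \<noteq> (n = k+1-j)"
    and sums: "\<And>i. i \<in> {1..k+2} - {j} \<Longrightarrow> node i d r \<oplus> node i d r' = \<zero>"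
  shows "node j d r = \<zero> \<and> node j d r' = \<zero>"
proof -
  have closed: "d i r \<in> carrier R" "d i r' \<in> carrier R" if "i \<in> {1..k}" for i
    using file_closed[OF d that] r by auto
  have others: "d i r \<oplus> d i r' = \<zero>" if "i \<in> {1..k} - {j}" for i
    using sums[of i] that node_systematic by auto
  have "(\<Oplus>i\<in>{1..k}. d i r \<oplus> d i r') = \<zero>"
    using sums[of "k+1"] node_parity1_add[OF d r] j by simp
  then have sum: "d j r \<oplus> d j r' = \<zero>"
    using finsum_eq_single[of "{1..k}" j "\<lambda>i. d i r \<oplus> d i r'"] j closed others by auto
  have "eig i r' = eig i r" if i: "i \<in> {1..k} - {j}" for i
  proof -
    have "k+1-i \<noteq> k+1-j" "0 \<noteq> k+1-j"
      using i j by auto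
    then show ?thesis
      using eig_cong[of i r r'] bits[of "k+1-i"] bits[of 0] i by auto
  qed
  then have others': "eig i r \<otimes> d i r \<oplus> eig i r' \<otimes> d i r' = \<zero>" if "i \<in> {1..k} - {j}" for i
    using that others[OF that] closed eig_closed by (simp add: r_distr[symmetric])
  have "(\<Oplus>i\<in>{1..k}. eig i r \<otimes> d i r \<oplus> eig i r' \<otimes> d i r') = \<zero>"
    using sums[of "k+2"] node_parity2_add[OF d r] j by simp
  then have weighted: "eig j r \<otimes> d j r \<oplus> eig j r' \<otimes> d j r' = \<zero>"
    using finsum_eq_single[of "{1..k}" j "\<lambda>i. eig i r \<otimes> d i r \<oplus> eig i r' \<otimes> d i r'"]
      j closed eig_closed others' by auto
  have "eig j r \<noteq> eig j r'"
    using eig_ne[OF j] bits j by auto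
  then show ?thesis
    using zero_if_sum_and_weighted_sum_zero[OF closed[OF j] eig_closed eig_closed sum weighted]
      node_systematic[OF j] j by simp
qed

lemma recover_parity1:
  assumes d: "is_file R k N d" and r: "r < N" "r' < N"
    and bits: "\<And>n. n \<le> k \<Longrightarrow> bit r' n \<longleftrightarrow> \<not> bit r n"
    and systematic: "\<And>i. i \<in> {1..k} \<Longrightarrow> d i r' = d i r"
    and parity2: "node (k+2) d r \<oplus> node (k+2) d r' = \<zero>"
  shows "node (k+1) d r = \<zero> \<and> node (k+1) d r' = \<zero>"
proof -
  have closed: "d i r \<in> carrier R" if "i \<in> {1..k}" for i
    using file_closed[OF d that] r by auto
  have sum_closed: "(\<Oplus>i\<in>{1..k}. d i r) \<in> carrier R"
    using closed by (intro finsum_closed) auto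
  have pointwise: "eig i r \<otimes> d i r \<oplus> eig i r' \<otimes> d i r' = (\<one> \<oplus> \<one>) \<otimes> d i r"
    if i: "i \<in> {1..k}" for i
  proof -
    have "k+1-i \<le> k"
      using i by auto
    then have "eig i r \<oplus> eig i r' = \<one> \<oplus> \<one>"
      using bits[of "k+1-i"] bits[of 0] by (intro eig_add_eq_two[OF i]) auto
    then show ?thesis
      using systematic[OF i] closed[OF i] eig_closed[OF i] by (simp add: l_distr[symmetric])
  qed
  have "(\<one> \<oplus> \<one>) \<otimes> (\<Oplus>i\<in>{1..k}. d i r) = (\<Oplus>i\<in>{1..k}. (\<one> \<oplus> \<one>) \<otimes> d i r)"
    using closed by (intro finsum_rdistr) auto
  also have "\<dots> = (\<Oplus>i\<in>{1..k}. eig i r \<otimes> d i r \<oplus> eig i r' \<otimes> d i r')"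
    using pointwise closed by (intro finsum_cong') auto
  also have "\<dots> = \<zero>"
    using parity2 node_parity2_add[OF d r] by simp
  finally have "(\<Oplus>i\<in>{1..k}. d i r) = \<zero>"
    using integral[OF _ _ sum_closed] two_nonzero by auto
  moreover have "(\<Oplus>i\<in>{1..k}. d i r') = (\<Oplus>i\<in>{1..k}. d i r)"
    using systematic closed by (intro finsum_cong') auto
  ultimately show ?thesis
    using node_parity1[of d r] node_parity1[of d r'] by simp
qed

lemma recover_parity2:
  assumes d: "is_file R k N d" and r: "r < N" "r' < N"
    and bits: "\<And>n. bit r' n \<longleftrightarrow> bit r n \<noteq> (0 < n \<and> n \<le> k)"
    and systematic: "\<And>i. i \<in> {1..k} \<Longrightarrow> eig i r' \<otimes> d i r' = eig i r \<otimes> d i r"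
    and parity1: "node (k+1) d r \<oplus> node (k+1) d r' = \<zero>"
  shows "node (k+2) d r = \<zero> \<and> node (k+2) d r' = \<zero>"
proof -
  have closed: "d i r \<in> carrier R" "d i r' \<in> carrier R" if "i \<in> {1..k}" for i
    using file_closed[OF d that] r by auto
  have inv_eig: "inv eig i s \<in> carrier R" "inv eig i s \<otimes> eig i s = \<one>" if "i \<in> {1..k}" for i s
    using eig_closed[OF that] eig_nonzero[OF that] field_Units by auto
  have "d i r \<oplus> d i r' = eig i r \<otimes> d i r" if i: "i \<in> {1..k}" for i
  proof -
    have "d i r \<oplus> d i r' = inv eig i r \<otimes> (eig i r \<otimes> d i r) \<oplus> inv eig i r' \<otimes> (eig i r' \<otimes> d i r')"
      using inv_eig[OF i] closed[OF i] eig_closed[OF i] by (simp add: m_assoc[symmetric])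
    also have "\<dots> = (inv eig i r \<oplus> inv eig i r') \<otimes> (eig i r \<otimes> d i r)"
      using systematic[OF i] inv_eig[OF i] closed[OF i] eig_closed[OF i] by (simp add: l_distr)
    also have "\<dots> = eig i r \<otimes> d i r"
    proof -
      have "inv eig i r \<oplus> inv eig i r' = \<one>"
        using i bits[of "k+1-i"] bits[of 0] by (intro inv_eig_add_eq_one[OF i]) auto
      then show ?thesis
        using closed[OF i] eig_closed[OF i] by simp
    qed
    finally show ?thesis .
  qed
  then have "(\<Oplus>i\<in>{1..k}. eig i r \<otimes> d i r) = (\<Oplus>i\<in>{1..k}. d i r \<oplus> d i r')"
    using closed eig_closed by (intro finsum_cong') auto
  also have "\<dots> = node (k+1) d r \<oplus> node (k+1) d r'"
    by (rule node_parity1_add[OF d r, symmetric])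
  finally have "(\<Oplus>i\<in>{1..k}. eig i r \<otimes> d i r) = \<zero>"
    using parity1 by simp
  moreover have "(\<Oplus>i\<in>{1..k}. eig i r' \<otimes> d i r') = (\<Oplus>i\<in>{1..k}. eig i r \<otimes> d i r)"
    using systematic closed eig_closed by (intro finsum_cong') auto
  ultimately show ?thesis
    using node_parity2_diagonal[OF d r(1)] node_parity2_diagonal[OF d r(2)] by simp
qed

lemma repairable_systematic:
  assumes j: "j \<in> {1..k}"
  shows "repairable j"
proof -
  define m where "m = k + 1 - j"
  have "m < k + 1"
    using j by (auto simp: m_def)
  then have "(2::nat) ^ m < N"
    by (intro power_strict_increasing) simp_all
  have bits: "bit (xor r (2 ^ m)) n \<longleftrightarrow> bit r n \<noteq> (n = m)" for r n :: nat
    by (auto simp: bit_xor_iff bit_exp_iff)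
  show ?thesis
  proof (rule repair_by_pairing[where \<rho> = "\<lambda>r. xor r (2 ^ m)" and P = "\<lambda>r. \<not> bit r m"
        and \<alpha> = "\<lambda>_ _. \<one>" and \<beta> = "\<lambda>_ _. \<one>"])
    fix d r
    assume d: "is_file R k N d" and r: "r < N"
      and H: "\<forall>i\<in>{1..k+2} - {j}. \<one> \<otimes> node i d r \<oplus> \<one> \<otimes> node i d (xor r (2 ^ m)) = \<zero>"
    show "node j d r = \<zero> \<and> node j d (xor r (2 ^ m)) = \<zero>"
    proof (rule recover_systematic[OF j d r])
      show "xor r (2 ^ m) < N"
        using xor_less_power[OF r \<open>2 ^ m < N\<close>] .
      show "bit (xor r (2 ^ m)) n \<longleftrightarrow> bit r n \<noteq> (n = k + 1 - j)" for n
        using bits m_def by simp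
      show "node i d r \<oplus> node i d (xor r (2 ^ m)) = \<zero>" if "i \<in> {1..k+2} - {j}" for i
        using H that node_closed[OF d] r xor_less_power[OF r \<open>2 ^ m < N\<close>] by simp
    qed
  next
    show "xor r (2 ^ m) < N" if "r < N" for r
      using xor_less_power[OF that \<open>2 ^ m < N\<close>] .
  qed (simp_all add: bits xor.assoc)
qed

lemma repairable_parity1: "repairable (k+1)"
proof -
  have "mask (k+1) < N"
    by (simp add: mask_nat_def)
  have bits: "bit (xor r (mask (k+1))) n \<longleftrightarrow> bit r n \<noteq> (n \<le> k)" for r n :: nat
    by (auto simp: bit_xor_iff bit_mask_iff)
  show ?thesis
  proof (rule repair_by_pairing[where \<rho> = "\<lambda>r. xor r (mask (k+1))" and P = "\<lambda>r. \<not> bit r k"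
        and \<alpha> = "\<lambda>_ _. \<one>" and \<beta> = "\<lambda>i _. if i = k+2 then \<one> else \<ominus> \<one>"])
    fix d r
    assume d: "is_file R k N d" and r: "r < N"
      and H: "\<forall>i\<in>{1..k+2} - {k+1}. \<one> \<otimes> node i d r
        \<oplus> (if i = k+2 then \<one> else \<ominus> \<one>) \<otimes> node i d (xor r (mask (k+1))) = \<zero>"
    define r' where "r' = xor r (mask (k+1))"
    have r': "r' < N"
      unfolding r'_def using xor_less_power[OF r \<open>mask (k+1) < N\<close>] .
    have "d i r' = d i r" if i: "i \<in> {1..k}" for i
    proof -
      have mem: "i \<in> {1..k+2} - {k+1}"
        using i by auto
      have "\<one> \<otimes> d i r \<oplus> \<ominus> \<one> \<otimes> d i r' = \<zero>"
        using bspec[OF H mem] i unfolding node_systematic[OF i] r'_def[symmetric] by auto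
      then have "d i r \<ominus> d i r' = \<zero>"
        using file_closed[OF d i r] file_closed[OF d i r'] by (simp add: l_minus minus_eq)
      then show ?thesis
        using file_closed[OF d i r] file_closed[OF d i r'] r_right_minus_eq by simp
    qed
    moreover have "node (k+2) d r \<oplus> node (k+2) d r' = \<zero>"
      using H[rule_format, of "k+2"] node_closed[OF d r] node_closed[OF d r'] by (simp add: r'_def)
    ultimately show "node (k+1) d r = \<zero> \<and> node (k+1) d r' = \<zero>"
      using recover_parity1[OF d r r'] bits unfolding r'_def by simp
  next
    show "xor r (mask (k+1)) < N" if "r < N" for r
      using xor_less_power[OF that \<open>mask (k+1) < N\<close>] .
    show "(\<not> bit (xor r (mask (k+1))) k) \<longleftrightarrow> \<not> \<not> bit r k" for r :: nat
      using bits[of r k] by simp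
  qed (simp_all add: xor.assoc)
qed

lemma repairable_parity2:
  assumes "1 \<le> k"
  shows "repairable (k+2)"
proof -
  have "2 * mask k < N"
    by (simp add: mask_nat_def)
  have bits: "bit (xor r (2 * mask k)) n \<longleftrightarrow> bit r n \<noteq> (0 < n \<and> n \<le> k)" for r n :: nat
    by (auto simp: bit_xor_iff bit_double_iff bit_mask_iff)
  show ?thesis
  proof (rule repair_by_pairing[where \<rho> = "\<lambda>r. xor r (2 * mask k)" and P = "\<lambda>r. \<not> bit r k"
        and \<alpha> = "\<lambda>i r. if i = k+1 then \<one> else eig i r"
        and \<beta> = "\<lambda>i r. if i = k+1 then \<one> else \<ominus> eig i (xor r (2 * mask k))"])
    fix d r
    assume d: "is_file R k N d" and r: "r < N"
      and H: "\<forall>i\<in>{1..k+2} - {k+2}. (if i = k+1 then \<one> else eig i r) \<otimes> node i d r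
        \<oplus> (if i = k+1 then \<one> else \<ominus> eig i (xor r (2 * mask k))) \<otimes> node i d (xor r (2 * mask k)) = \<zero>"
    define r' where "r' = xor r (2 * mask k)"
    have r': "r' < N"
      unfolding r'_def using xor_less_power[OF r \<open>2 * mask k < N\<close>] .
    have "eig i r' \<otimes> d i r' = eig i r \<otimes> d i r" if i: "i \<in> {1..k}" for i
    proof -
      have mem: "i \<in> {1..k+2} - {k+2}"
        using i by auto
      have "eig i r \<otimes> d i r \<oplus> \<ominus> eig i r' \<otimes> d i r' = \<zero>"
        using bspec[OF H mem] i unfolding node_systematic[OF i] r'_def[symmetric] by auto
      then have "eig i r \<otimes> d i r \<ominus> eig i r' \<otimes> d i r' = \<zero>"
        using file_closed[OF d i r] file_closed[OF d i r'] eig_closed[OF i] by (simp add: l_minus minus_eq)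
      then show ?thesis
        using file_closed[OF d i r] file_closed[OF d i r'] eig_closed[OF i] r_right_minus_eq by simp
    qed
    moreover have "node (k+1) d r \<oplus> node (k+1) d r' = \<zero>"
      using H[rule_format, of "k+1"] node_closed[OF d r] node_closed[OF d r'] by (simp add: r'_def)
    ultimately show "node (k+2) d r = \<zero> \<and> node (k+2) d r' = \<zero>"
      using recover_parity2[OF d r r'] bits unfolding r'_def by simp
  next
    show "xor r (2 * mask k) < N" if "r < N" for r
      using xor_less_power[OF that \<open>2 * mask k < N\<close>] .
  qed (use assms eig_closed in \<open>simp_all add: bits xor.assoc\<close>)
qed

theorem code_repair_optimal: "1 \<le> k \<Longrightarrow> repair_optimal R k N A"
proof (rule repair_optimalI)
  fix j assume "1 \<le> k" "j \<in> {1..k+2}"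
  then consider "j \<in> {1..k}" | "j = k+1" | "j = k+2"
    by fastforce
  then show "repairable j"
    by cases (use repairable_systematic repairable_parity1 repairable_parity2 \<open>1 \<le> k\<close> in auto)
qed

end

section \<open>A prime field of parameters\<close>

lemma code_parameters_residue_field:
  assumes p: "Factorial_Ring.prime p" and k: "1 \<le> k" and large: "(k+1) * (k+1) < p"
  shows "code_parameters (residue_field p) k (\<lambda>i. i + 1)"
proof (intro code_parameters.intro code_parameters_axioms.intro)
  have product: "(i + 1) \<otimes>\<^bsub>residue_field p\<^esub> (j + 1) = (i + 1) * (j + 1)" "(i + 1) * (j + 1) \<noteq> 1"
    if "i \<in> {1..k}" "j \<in> {1..k}" for i j
  proof -
    have "(i + 1) * (j + 1) \<le> (k + 1) * (k + 1)"
      using that by (intro mult_le_mono) auto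
    then show "(i + 1) \<otimes>\<^bsub>residue_field p\<^esub> (j + 1) = (i + 1) * (j + 1)"
      using large by (simp add: residue_field_def)
    show "(i + 1) * (j + 1) \<noteq> 1"
      using that by simp
  qed
  have "4 \<le> (k + 1) * (k + 1)"
    using k mult_le_mono[of 2 "k+1" 2 "k+1"] by simp
  then show "\<one>\<^bsub>residue_field p\<^esub> \<oplus>\<^bsub>residue_field p\<^esub> \<one>\<^bsub>residue_field p\<^esub> \<noteq> \<zero>\<^bsub>residue_field p\<^esub>"
    using large by (simp add: residue_field_def)
  show "field (residue_field p)"
    using field_residue_field[OF p] .
  show "i + 1 \<in> carrier (residue_field p)" if "i \<in> {1..k}" for i
    using that large by (simp add: residue_field_def)
  show "i + 1 \<noteq> \<zero>\<^bsub>residue_field p\<^esub>" for i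
    by (simp add: residue_field_def)
  show "(i + 1) \<otimes>\<^bsub>residue_field p\<^esub> (i + 1) \<noteq> \<one>\<^bsub>residue_field p\<^esub>" if "i \<in> {1..k}" for i
    using product[OF that that] by (simp add: residue_field_def)
  show "i + 1 \<noteq> j + 1" if "i \<noteq> j" for i j :: nat
    using that by simp
  show "(i + 1) \<otimes>\<^bsub>residue_field p\<^esub> (j + 1) \<noteq> \<one>\<^bsub>residue_field p\<^esub>" if "i \<in> {1..k}" "j \<in> {1..k}" for i j
    using product[OF that] by (simp add: residue_field_def)
qed

theorem theorem1:
  fixes k :: nat
  assumes "k \<ge> 1"
  shows "\<exists>(R :: nat ring) a b.
           field R \<and> finite (carrier R) \<and> card (carrier R) \<ge> 2 * k + 3 \<and>
           (\<forall>i\<in>{1..k}. a i \<in> carrier R \<and> b i \<in> carrier R \<and>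
              (a i \<otimes>\<^bsub>R\<^esub> a i) \<ominus>\<^bsub>R\<^esub> (b i \<otimes>\<^bsub>R\<^esub> b i) = \<ominus>\<^bsub>R\<^esub> \<one>\<^bsub>R\<^esub>) \<and>
           is_MDS_code R k (2 ^ (k + 1)) (coding_mats R k (2 ^ (k + 1)) a b) \<and>
           repair_optimal R k (2 ^ (k + 1)) (coding_mats R k (2 ^ (k + 1)) a b)"
proof -
  obtain p :: nat where p: "Factorial_Ring.prime p" and large: "(k+1) * (k+1) + 2 * k + 3 < p"
    using bigger_prime by blast
  interpret code_parameters "residue_field p" k "\<lambda>i. i + 1"
    using code_parameters_residue_field[OF p assms] large by simp
  have "finite (carrier (residue_field p))" "card (carrier (residue_field p)) \<ge> 2 * k + 3"
    using large by (simp_all add: residue_field_def)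
  then show ?thesis
    using field_axioms a_coeff_closed b_coeff_closed a_coeff_square_minus_b_coeff_square
      code_is_MDS code_repair_optimal[OF assms] by blast
qed

end
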